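(* Let $\mathcal{T}$ be the set of 9-tuples $(G_1,G_2,G_3,V_{1,2},V_{1,3},V_{2,1},V_{2,3},V_{3,1},V_{3,2})$ of monic polynomials satisfying $(V_{i,j},V_{k,l})=1$ whenever both $i\ne k$ and $j\ne l$. Then the map sending such a tuple to $$A_1=G_1V_{1,2}V_{1,3},\ A_2=G_2V_{2,1}V_{2,3},\ A_3=G_3V_{3,1}V_{3,2},\quad B_1=G_1V_{2,1}V_{3,1},\ B_2=G_2V_{1,2}V_{3,2},\ B_3=G_3V_{1,3}V_{2,3}$$ is a bijection from $\mathcal{T}$ onto the set of 6-tuples $(A_1,A_2,A_3,B_1,B_2,B_3)$ of monic polynomials satisfying $A_1A_2A_3=B_1B_2B_3$. (In particular every such 6-tuple arises this way, with $G_i=(A_i,B_i)$.)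
   Context: Polynomials are in $\mathbb{F}_q[T]$ with $q$ a prime power; $(A,B)$ denotes the monic greatest common divisor. *)

theory Defs
  imports "HOL-Computational_Algebra.Polynomial_Factorial"
begin

type_synonym 'a tup9 = "'a poly \<times> 'a poly \<times> 'a poly \<times> 'a poly \<times> 'a poly \<times> 'a poly \<times> 'a poly \<times> 'a poly \<times> 'a poly"
type_synonym 'a tup6 = "'a poly \<times> 'a poly \<times> 'a poly \<times> 'a poly \<times> 'a poly \<times> 'a poly"

definition monic :: "'a::field poly \<Rightarrow> bool" where
  "monic p \<longleftrightarrow> lead_coeff p = 1"

fun Vsel :: "'a tup9 \<Rightarrow> nat \<Rightarrow> nat \<Rightarrow> 'a poly" where
  "Vsel (G1,G2,G3,V12,V13,V21,V23,V31,V32) i j =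
     (if i = 1 \<and> j = 2 then V12 else if i = 1 \<and> j = 3 then V13 else
      if i = 2 \<and> j = 1 then V21 else if i = 2 \<and> j = 3 then V23 else
      if i = 3 \<and> j = 1 then V31 else V32)"

definition Tset :: "'a::{field,factorial_ring_gcd,semiring_gcd_mult_normalize} tup9 set" where
  "Tset = {t. (case t of (G1,G2,G3,V12,V13,V21,V23,V31,V32) \<Rightarrow>
              monic G1 \<and> monic G2 \<and> monic G3 \<and> monic V12 \<and> monic V13 \<and>
              monic V21 \<and> monic V23 \<and> monic V31 \<and> monic V32) \<and>
           (\<forall>i\<in>{1,2,3}. \<forall>j\<in>{1,2,3}. \<forall>k\<in>{1,2,3}. \<forall>l\<in>{1,2,3}.
              i \<noteq> j \<longrightarrow> k \<noteq> l \<longrightarrow> i \<noteq> k \<longrightarrow> j \<noteq> l \<longrightarrow>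
              gcd (Vsel t i j) (Vsel t k l) = 1)}"

definition Sset :: "'a::field tup6 set" where
  "Sset = {(A1,A2,A3,B1,B2,B3). monic A1 \<and> monic A2 \<and> monic A3 \<and>
              monic B1 \<and> monic B2 \<and> monic B3 \<and> A1 * A2 * A3 = B1 * B2 * B3}"

fun tmap :: "'a::field tup9 \<Rightarrow> 'a tup6" where
  "tmap (G1,G2,G3,V12,V13,V21,V23,V31,V32) =
     (G1 * V12 * V13, G2 * V21 * V23, G3 * V31 * V32,
      G1 * V21 * V31, G2 * V12 * V32, G3 * V13 * V23)"

end

theory Submission
  imports Defs
begin

text \<open>A monic polynomial is determined by its multiplicities at the primes, so the claims
reduce to statements about exponents. For a tuple in \<open>Tset\<close>, the coprimality conditions give
\<open>G\<^sub>i = (A\<^sub>i, B\<^sub>i)\<close> and \<open>V\<^sub>i\<^sub>j = (A\<^sub>i/G\<^sub>i, B\<^sub>j/G\<^sub>j)\<close>, which inverts the map. Conversely, given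
\<open>A\<^sub>1A\<^sub>2A\<^sub>3 = B\<^sub>1B\<^sub>2B\<^sub>3\<close>, put \<open>G\<^sub>i = (A\<^sub>i, B\<^sub>i)\<close>; the parts \<open>a\<^sub>i = A\<^sub>i/G\<^sub>i\<close> and \<open>b\<^sub>i = B\<^sub>i/G\<^sub>i\<close> are coprime and
\<open>a\<^sub>1a\<^sub>2a\<^sub>3 = b\<^sub>1b\<^sub>2b\<^sub>3\<close>. At a prime with exponents \<open>\<alpha>\<^sub>i, \<beta>\<^sub>i\<close> this means \<open>min \<alpha>\<^sub>i \<beta>\<^sub>i = 0\<close> and
\<open>\<Sum> \<alpha>\<^sub>i = \<Sum> \<beta>\<^sub>i\<close>, which forces \<open>\<alpha>\<^sub>1 = min \<alpha>\<^sub>1 \<beta>\<^sub>2 + min \<alpha>\<^sub>1 \<beta>\<^sub>3\<close>, i.e. \<open>a\<^sub>1 = (a\<^sub>1, b\<^sub>2)(a\<^sub>1, b\<^sub>3)\<close>, and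
likewise for every \<open>a\<^sub>i\<close> and \<open>b\<^sub>j\<close>. So \<open>V\<^sub>i\<^sub>j = (a\<^sub>i, b\<^sub>j)\<close> is a preimage; its coprimality conditions
are inherited from \<open>(a\<^sub>i, b\<^sub>i) = 1\<close>. Finiteness of the coefficient field plays no role.\<close>

lemma min_add_min_eq_if_sum_eq:
  fixes a1 a2 a3 b1 b2 b3 :: nat
  assumes "a1 + a2 + a3 = b1 + b2 + b3" "min a1 b1 = 0" "min a2 b2 = 0" "min a3 b3 = 0"
  shows "min a1 b2 + min a1 b3 = a1"
  using assms unfolding min_def by (auto split: if_splits)

lemma min_multiplicity_coprime:
  fixes a b :: "'a::factorial_semiring_gcd"
  assumes "coprime a b" "a \<noteq> 0" "b \<noteq> 0" "prime p"
  shows "min (multiplicity p a) (multiplicity p b) = 0"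
  using assms by (simp flip: multiplicity_gcd add: coprime_iff_gcd_eq_1)

lemma gcd_mult_gcd_eq_if_prod_eq:
  fixes a1 a2 a3 b1 b2 b3 :: "'a::{factorial_semiring_gcd,semiring_gcd_mult_normalize}"
  assumes "normalize a1 = a1" and prod: "a1 * a2 * a3 = b1 * b2 * b3" "a1 * a2 * a3 \<noteq> 0"
    and "coprime a1 b1" "coprime a2 b2" "coprime a3 b3"
  shows "gcd a1 b2 * gcd a1 b3 = a1"
proof -
  have nonzero: "a1 \<noteq> 0" "a2 \<noteq> 0" "a3 \<noteq> 0" "b1 \<noteq> 0" "b2 \<noteq> 0" "b3 \<noteq> 0"
    using prod by auto
  have "multiplicity p (gcd a1 b2 * gcd a1 b3) = multiplicity p a1" if p: "prime p" for p
  proof -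
    have "multiplicity p (a1 * a2 * a3) = multiplicity p (b1 * b2 * b3)"
      using prod by simp
    then have "multiplicity p a1 + multiplicity p a2 + multiplicity p a3 =
               multiplicity p b1 + multiplicity p b2 + multiplicity p b3"
      using p nonzero by (simp add: prime_elem_multiplicity_mult_distrib)
    then show ?thesis
      using p nonzero assms(4-6)
      by (simp add: prime_elem_multiplicity_mult_distrib multiplicity_gcd min_multiplicity_coprime
          min_add_min_eq_if_sum_eq)
  qed
  then have "normalize (gcd a1 b2 * gcd a1 b3) = normalize a1"
    using nonzero by (intro multiplicity_eq_imp_eq) auto
  then show ?thesis
    using \<open>normalize a1 = a1\<close> by (simp add: normalize_mult)
qed

lemma gcd_mult_eq_if_coprime:
  fixes a b c :: "'a::semiring_gcd"
  assumes "normalize c = c" "coprime a b"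
  shows "gcd (c * a) (c * b) = c"
  using assms by (simp add: gcd_mult_left coprime_iff_gcd_eq_1)

lemma monic_iff_normalize:
  fixes p :: "'a::{field,factorial_ring_gcd,semiring_gcd_mult_normalize} poly"
  shows "monic p \<longleftrightarrow> p \<noteq> 0 \<and> normalize p = p"
proof
  assume "monic p"
  then show "p \<noteq> 0 \<and> normalize p = p"
    by (auto simp: monic_def normalize_poly_def one_pCons[symmetric])
next
  assume p: "p \<noteq> 0 \<and> normalize p = p"
  then have "unit_factor p = 1"
    by (metis mult_cancel_right1 unit_factor_mult_normalize)
  then have "unit_factor (lead_coeff p) = 1"
    by (simp add: unit_factor_poly_def one_pCons)
  moreover have "unit_factor (lead_coeff p) = lead_coeff p"
    using p by (simp add: dvd_field_iff is_unit_unit_factor)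
  ultimately show "monic p" by (simp add: monic_def)
qed

lemma monic_mult: "monic p \<Longrightarrow> monic q \<Longrightarrow> monic (p * q)"
  by (simp add: monic_def lead_coeff_mult)

lemma monic_div:
  fixes p q :: "'a::{field,factorial_ring_gcd,semiring_gcd_mult_normalize} poly"
  assumes "monic p" "monic q" "q dvd p"
  shows "monic (p div q)"
proof -
  have "lead_coeff p = lead_coeff q * lead_coeff (p div q)"
    using \<open>q dvd p\<close> by (metis dvd_mult_div_cancel lead_coeff_mult)
  then show ?thesis
    using assms by (simp add: monic_def)
qed

lemma Tset_iff:
  "((G1,G2,G3,V12,V13,V21,V23,V31,V32) :: 'a::{field,factorial_ring_gcd,semiring_gcd_mult_normalize} tup9) \<in> Tset \<longleftrightarrow>
   monic G1 \<and> monic G2 \<and> monic G3 \<and> monic V12 \<and> monic V13 \<and>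
   monic V21 \<and> monic V23 \<and> monic V31 \<and> monic V32 \<and>
   coprime V12 V21 \<and> coprime V12 V23 \<and> coprime V12 V31 \<and>
   coprime V13 V21 \<and> coprime V13 V31 \<and> coprime V13 V32 \<and>
   coprime V21 V32 \<and> coprime V23 V31 \<and> coprime V23 V32"
  unfolding Tset_def coprime_iff_gcd_eq_1 by (simp add: gcd.commute conj_ac)

lemma gcd_tmap_components:
  assumes "((G1,G2,G3,V12,V13,V21,V23,V31,V32) :: 'a::{field,factorial_ring_gcd,semiring_gcd_mult_normalize} tup9) \<in> Tset"
  shows "gcd (G1 * V12 * V13) (G1 * V21 * V31) = G1"
    and "gcd (G2 * V21 * V23) (G2 * V12 * V32) = G2"
    and "gcd (G3 * V31 * V32) (G3 * V13 * V23) = G3"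
  using assms unfolding Tset_iff monic_iff_normalize mult.assoc
  by (auto intro!: gcd_mult_eq_if_coprime simp: coprime_commute)

lemma tmap_in_Sset:
  fixes t :: "'a::{field,factorial_ring_gcd,semiring_gcd_mult_normalize} tup9"
  assumes "t \<in> Tset"
  shows "tmap t \<in> Sset"
proof -
  obtain G1 G2 G3 V12 V13 V21 V23 V31 V32 where t: "t = (G1,G2,G3,V12,V13,V21,V23,V31,V32)"
    by (cases t) auto
  have "G1 * V12 * V13 * (G2 * V21 * V23) * (G3 * V31 * V32) =
        G1 * V21 * V31 * (G2 * V12 * V32) * (G3 * V13 * V23)"
    by (simp only: mult_ac)
  then show ?thesis
    using assms unfolding t Tset_iff Sset_def by (simp add: monic_mult)
qed

definition tmap_inv :: "'a::{field,factorial_ring_gcd,semiring_gcd_mult_normalize} tup6 \<Rightarrow> 'a tup9" where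
  "tmap_inv = (\<lambda>(A1,A2,A3,B1,B2,B3).
     let G1 = gcd A1 B1; G2 = gcd A2 B2; G3 = gcd A3 B3;
         a1 = A1 div G1; a2 = A2 div G2; a3 = A3 div G3;
         b1 = B1 div G1; b2 = B2 div G2; b3 = B3 div G3
     in (G1, G2, G3, gcd a1 b2, gcd a1 b3, gcd a2 b1, gcd a2 b3, gcd a3 b1, gcd a3 b2))"

lemma tmap_inv_tmap:
  fixes t :: "'a::{field,factorial_ring_gcd,semiring_gcd_mult_normalize} tup9"
  assumes "t \<in> Tset"
  shows "tmap_inv (tmap t) = t"
proof -
  obtain G1 G2 G3 V12 V13 V21 V23 V31 V32 where t: "t = (G1,G2,G3,V12,V13,V21,V23,V31,V32)"
    by (cases t) auto
  note T = assms[unfolded t Tset_iff monic_iff_normalize]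
  have "gcd (V12 * V13) (V12 * V32) = V12"
    using T gcd_mult_eq_if_coprime[of V12 V13 V32] by simp
  moreover have "gcd (V12 * V13) (V13 * V23) = V13"
    using T gcd_mult_eq_if_coprime[of V13 V12 V23] by (simp add: ac_simps)
  moreover have "gcd (V21 * V23) (V21 * V31) = V21"
    using T gcd_mult_eq_if_coprime[of V21 V23 V31] by (simp add: coprime_commute)
  moreover have "gcd (V21 * V23) (V13 * V23) = V23"
    using T gcd_mult_eq_if_coprime[of V23 V21 V13] by (simp add: ac_simps)
  moreover have "gcd (V31 * V32) (V21 * V31) = V31"
    using T gcd_mult_eq_if_coprime[of V31 V32 V21] by (simp add: ac_simps)
  moreover have "gcd (V31 * V32) (V12 * V32) = V32"
    using T gcd_mult_eq_if_coprime[of V32 V31 V12] by (simp add: ac_simps)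
  ultimately show ?thesis
    using T gcd_tmap_components[OF assms[unfolded t]]
    by (simp add: t tmap_inv_def Let_def mult.assoc)
qed

context
  fixes G1 G2 G3 a1 a2 a3 b1 b2 b3 :: "'a::{field,factorial_ring_gcd,semiring_gcd_mult_normalize} poly"
  assumes monic: "monic G1" "monic G2" "monic G3"
    "monic a1" "monic a2" "monic a3" "monic b1" "monic b2" "monic b3"
    and coprime: "coprime a1 b1" "coprime a2 b2" "coprime a3 b3"
    and prod_eq: "a1 * a2 * a3 = b1 * b2 * b3"
begin

lemma gcd_tuple_in_Tset:
  "(G1, G2, G3, gcd a1 b2, gcd a1 b3, gcd a2 b1, gcd a2 b3, gcd a3 b1, gcd a3 b2) \<in> Tset"
  using monic coprime unfolding Tset_iff
  by (simp add: monic_iff_normalize coprime_divisors[OF gcd_dvd1 gcd_dvd2]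
      coprime_divisors[OF gcd_dvd2 gcd_dvd1] coprime_commute)

lemma tmap_gcd_tuple:
  "tmap (G1, G2, G3, gcd a1 b2, gcd a1 b3, gcd a2 b1, gcd a2 b3, gcd a3 b1, gcd a3 b2) =
   (G1 * a1, G2 * a2, G3 * a3, G1 * b1, G2 * b2, G3 * b3)"
proof -
  have nonzero: "a1 * a2 * a3 \<noteq> 0"
    using monic by (simp add: monic_iff_normalize)
  have "gcd a1 b2 * gcd a1 b3 = a1" "gcd a2 b1 * gcd a2 b3 = a2" "gcd a3 b1 * gcd a3 b2 = a3"
    "gcd b1 a2 * gcd b1 a3 = b1" "gcd b2 a1 * gcd b2 a3 = b2" "gcd b3 a1 * gcd b3 a2 = b3"
    using gcd_mult_gcd_eq_if_prod_eq[of a1 a2 a3 b1 b2 b3] gcd_mult_gcd_eq_if_prod_eq[of a2 a1 a3 b2 b1 b3]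
      gcd_mult_gcd_eq_if_prod_eq[of a3 a1 a2 b3 b1 b2] gcd_mult_gcd_eq_if_prod_eq[of b1 b2 b3 a1 a2 a3]
      gcd_mult_gcd_eq_if_prod_eq[of b2 b1 b3 a2 a1 a3] gcd_mult_gcd_eq_if_prod_eq[of b3 b1 b2 a3 a1 a2]
      monic coprime prod_eq nonzero
    by (simp_all add: monic_iff_normalize ac_simps)
  then show ?thesis
    by (simp add: mult.assoc gcd.commute)
qed

end

lemma tmap_inv_Sset:
  fixes s :: "'a::{field,factorial_ring_gcd,semiring_gcd_mult_normalize} tup6"
  assumes "s \<in> Sset"
  shows "tmap_inv s \<in> Tset" and "tmap (tmap_inv s) = s"
proof -
  obtain A1 A2 A3 B1 B2 B3 where s: "s = (A1,A2,A3,B1,B2,B3)"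
    by (cases s) auto
  have monic: "monic A1" "monic A2" "monic A3" "monic B1" "monic B2" "monic B3"
    and prod_eq: "A1 * A2 * A3 = B1 * B2 * B3"
    using assms by (auto simp: s Sset_def)
  define G1 G2 G3 where "G1 = gcd A1 B1" and "G2 = gcd A2 B2" and "G3 = gcd A3 B3"
  define a1 a2 a3 where "a1 = A1 div G1" and "a2 = A2 div G2" and "a3 = A3 div G3"
  define b1 b2 b3 where "b1 = B1 div G1" and "b2 = B2 div G2" and "b3 = B3 div G3"
  note defs = G1_def G2_def G3_def a1_def a2_def a3_def b1_def b2_def b3_def
  have inv: "tmap_inv s = (G1, G2, G3, gcd a1 b2, gcd a1 b3, gcd a2 b1, gcd a2 b3, gcd a3 b1, gcd a3 b2)"
    by (simp add: s tmap_inv_def Let_def defs)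
  have factor: "s = (G1 * a1, G2 * a2, G3 * a3, G1 * b1, G2 * b2, G3 * b3)"
    by (simp add: s defs)
  have monic_G: "monic G1" "monic G2" "monic G3"
    using monic by (simp_all add: G1_def G2_def G3_def monic_iff_normalize)
  have monic_ab: "monic a1" "monic a2" "monic a3" "monic b1" "monic b2" "monic b3"
    using monic monic_G by (simp_all add: defs monic_div)
  have coprime: "coprime a1 b1" "coprime a2 b2" "coprime a3 b3"
    using monic by (simp_all add: defs div_gcd_coprime monic_iff_normalize)
  have "(G1 * G2 * G3) * (a1 * a2 * a3) = (G1 * G2 * G3) * (b1 * b2 * b3)"
    using prod_eq factor by (simp add: s ac_simps)
  then have "a1 * a2 * a3 = b1 * b2 * b3"
    using monic_G by (simp add: monic_iff_normalize)
  note parts = monic_G monic_ab coprime this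
  show "tmap_inv s \<in> Tset"
    unfolding inv by (rule gcd_tuple_in_Tset[OF parts])
  show "tmap (tmap_inv s) = s"
    unfolding inv tmap_gcd_tuple[OF parts] by (rule factor[symmetric])
qed

theorem lemma7p3:
  shows "bij_betw (tmap :: ('a::{field,factorial_ring_gcd,semiring_gcd_mult_normalize,finite}) tup9 \<Rightarrow> 'a tup6) Tset Sset \<and>
    (\<forall>G1 G2 G3 V12 V13 V21 V23 V31 V32.
       ((G1,G2,G3,V12,V13,V21,V23,V31,V32) :: 'a tup9) \<in> Tset \<longrightarrow>
       gcd (G1 * V12 * V13) (G1 * V21 * V31) = G1 \<and>
       gcd (G2 * V21 * V23) (G2 * V12 * V32) = G2 \<and>
       gcd (G3 * V31 * V32) (G3 * V13 * V23) = G3)"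
proof
  show "bij_betw (tmap :: 'a tup9 \<Rightarrow> 'a tup6) Tset Sset"
  proof (rule bij_betw_byWitness[where f' = tmap_inv])
    show "\<forall>t\<in>Tset. tmap_inv (tmap t) = (t :: 'a tup9)"
      using tmap_inv_tmap by blast
    show "\<forall>s\<in>Sset. tmap (tmap_inv s) = (s :: 'a tup6)"
      using tmap_inv_Sset by blast
    show "tmap ` Tset \<subseteq> (Sset :: 'a tup6 set)"
      using tmap_in_Sset by blast
    show "tmap_inv ` Sset \<subseteq> (Tset :: 'a tup9 set)"
      using tmap_inv_Sset by blast
  qed
qed (auto simp: gcd_tmap_components)

end
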